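(* Let $G$ be a graph with maximum degree $\Delta\ge3$. Then $\pi_T(G)<15\Delta^2$.
   Context: Graphs are finite and simple. A sequence is nonrepetitive if no block of consecutive terms has the form $r_1\dots r_nr_1\dots r_n$ with $n\ge1$. A (strong) total Thue colouring of $G$ is a colouring of $V(G)\cup E(G)$ such that for every path $v_1,e_1,v_2,\dots,e_{k-1},v_k$ in $G$ the sequence of colours of $v_1,e_1,\dots,v_k$ is nonrepetitive, the sequence of colours of $v_1,\dots,v_k$ is nonrepetitive, and the sequence of colours of $e_1,\dots,e_{k-1}$ is nonrepetitive. $\pi_T(G)$ is the minimum number of colours in a total Thue colouring of $G$. *)

theory Defs
  imports Main
begin

definition simple_graph :: "'a set \<Rightarrow> 'a set set \<Rightarrow> bool" where
  "simple_graph V E \<longleftrightarrow> finite V \<and>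
     (\<forall>e\<in>E. \<exists>u v. u \<noteq> v \<and> e = {u, v} \<and> u \<in> V \<and> v \<in> V)"

definition degree :: "'a set set \<Rightarrow> 'a \<Rightarrow> nat" where
  "degree E v = card {e\<in>E. v \<in> e}"

definition max_degree :: "'a set \<Rightarrow> 'a set set \<Rightarrow> nat" where
  "max_degree V E = Max (degree E ` V)"

definition nonrepetitive :: "'c list \<Rightarrow> bool" where
  "nonrepetitive xs \<longleftrightarrow>
     \<not> (\<exists>i n. n \<ge> 1 \<and> i + 2 * n \<le> length xs \<and>
            take n (drop i xs) = take n (drop (i + n) xs))"

definition is_path :: "'a set \<Rightarrow> 'a set set \<Rightarrow> 'a list \<Rightarrow> bool" where
  "is_path V E vs \<longleftrightarrow> vs \<noteq> [] \<and> set vs \<subseteq> V \<and> distinct vs \<and>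
     (\<forall>i. Suc i < length vs \<longrightarrow> {vs ! i, vs ! Suc i} \<in> E)"

definition path_edges :: "'a list \<Rightarrow> 'a set list" where
  "path_edges vs = map (\<lambda>i. {vs ! i, vs ! Suc i}) [0..<length vs - 1]"

text \<open>Colour sequence of v_1, e_1, v_2, ..., e_{k-1}, v_k; a total colouring
  colours vertices (Inl v) and edges (Inr e).\<close>
fun total_seq :: "('a + 'a set \<Rightarrow> 'c) \<Rightarrow> 'a list \<Rightarrow> 'c list" where
  "total_seq c [] = []"
| "total_seq c [v] = [c (Inl v)]"
| "total_seq c (v # w # vs) = c (Inl v) # c (Inr {v, w}) # total_seq c (w # vs)"

definition total_thue_colouring ::
    "'a set \<Rightarrow> 'a set set \<Rightarrow> ('a + 'a set \<Rightarrow> nat) \<Rightarrow> nat \<Rightarrow> bool" where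
  "total_thue_colouring V E c k \<longleftrightarrow>
     (\<forall>v\<in>V. c (Inl v) < k) \<and> (\<forall>e\<in>E. c (Inr e) < k) \<and>
     (\<forall>vs. is_path V E vs \<longrightarrow>
        nonrepetitive (total_seq c vs) \<and>
        nonrepetitive (map (\<lambda>v. c (Inl v)) vs) \<and>
        nonrepetitive (map (\<lambda>e. c (Inr e)) (path_edges vs)))"

definition pi_T :: "'a set \<Rightarrow> 'a set set \<Rightarrow> nat" where
  "pi_T V E = (LEAST k. \<exists>c. total_thue_colouring V E c k)"

end

(*
  Rosenfeld's counting argument. Call a list q a candidate if it is an even-length block of the
  vertex, edge or total colour sequence of a path, and call a colouring of a set S of vertices and
  edges good if it colours no candidate inside S as a square. Suppose every element lies on
  candidates whose weights alpha^-(|q|/2 - 1) sum to at most k - alpha. Then adding one element x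
  to S multiplies the number of good colourings by at least alpha: among the k extensions of the
  good colourings of S, those creating a square on a candidate q through x are determined by their
  values off the half of q containing x, and by induction there are at most alpha^-(|q|/2 - 1)
  times as many of them as good colourings of S. In a graph of maximum degree D >= 3, a vertex or
  an edge lies on at most 5 * 2^(l-1) * D^(2l) candidates of length 2l, since each comes from a
  path of at most 2l + 1 vertices through a fixed vertex. With alpha = 5 D^2 the weights sum to at
  most 25 D^2 / 3 <= (15 D^2 - 1) - alpha, so 15 D^2 - 1 colours suffice.
*)

theory Submission
  imports Defs Complex_Main "HOL-Library.FuncSet"
begin

section \<open>Counting square-free colourings\<close>

definition is_square :: "'c list \<Rightarrow> bool" where
  "is_square xs \<longleftrightarrow> take (length xs div 2) xs = drop (length xs div 2) xs"

definition square_free_colourings :: "'e list set \<Rightarrow> nat \<Rightarrow> 'e set \<Rightarrow> ('e \<Rightarrow> nat) set" where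
  "square_free_colourings Q k S =
     {f \<in> S \<rightarrow>\<^sub>E {..<k}. \<forall>q\<in>Q. set q \<subseteq> S \<longrightarrow> \<not> is_square (map f q)}"

lemma finite_square_free_colourings: "finite S \<Longrightarrow> finite (square_free_colourings Q k S)"
  unfolding square_free_colourings_def
  by (rule finite_subset[OF _ finite_PiE[of S "\<lambda>_. {..<k}"]]) auto

lemma restrict_in_square_free_colourings:
  assumes f: "f \<in> square_free_colourings Q k S" and "T \<subseteq> S"
  shows "restrict f T \<in> square_free_colourings Q k T"
proof -
  have "\<not> is_square (map (restrict f T) q)" if "q \<in> Q" "set q \<subseteq> T" for q
  proof -
    have "\<not> is_square (map f q)"
      using f that \<open>T \<subseteq> S\<close> by (auto simp: square_free_colourings_def)
    moreover have "map (restrict f T) q = map f q"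
      using that by (auto simp: restrict_def)
    ultimately show ?thesis by metis
  qed
  moreover have "restrict f T \<in> T \<rightarrow>\<^sub>E {..<k}"
    using assms by (auto simp: square_free_colourings_def)
  ultimately show ?thesis by (simp add: square_free_colourings_def)
qed

lemma square_halves:
  assumes "distinct q" "even (length q)" "x \<in> set q"
  obtains H R where "length H = length q div 2" "length R = length q div 2"
    "distinct H" "x \<in> set H"
    "set H \<inter> set R = {}" "set H \<union> set R = set q"
    "\<And>g. is_square (map g q) \<Longrightarrow> map g H = map g R"
proof -
  define l where "l = length q div 2"
  have disj: "set (take l q) \<inter> set (drop l q) = {}"
    using assms set_take_disj_set_drop_if_distinct by blast
  have un: "set (take l q) \<union> set (drop l q) = set q"
    by (metis append_take_drop_id set_append)
  have sq: "map g (take l q) = map g (drop l q)" "map g (drop l q) = map g (take l q)"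
    if "is_square (map g q)" for g
    using that by (simp_all add: is_square_def take_map drop_map l_def)
  show ?thesis
  proof (cases "x \<in> set (take l q)")
    case True
    show ?thesis
      by (rule that[of "take l q" "drop l q"]) (use assms True disj un sq in \<open>auto simp: l_def\<close>)
  next
    case False
    then have "x \<in> set (drop l q)" using un assms by auto
    show ?thesis
      by (rule that[of "drop l q" "take l q"])
        (use assms \<open>x \<in> set (drop l q)\<close> disj un sq in \<open>auto simp: l_def\<close>)
  qed
qed

lemma growth_iterate:
  fixes F :: "'a set \<Rightarrow> real" and \<alpha> :: real
  assumes grow: "\<And>T y. T \<subseteq> S \<Longrightarrow> y \<in> S - T \<Longrightarrow> \<alpha> * F T \<le> F (insert y T)"
    and "\<alpha> \<ge> 0" "finite D" "D \<subseteq> S" "T \<subseteq> S" "T \<inter> D = {}"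
  shows "\<alpha> ^ card D * F T \<le> F (T \<union> D)"
  using assms(3-)
proof (induction D rule: finite_induct)
  case (insert y D)
  have "\<alpha> ^ card (insert y D) * F T = \<alpha> * (\<alpha> ^ card D * F T)"
    using insert by simp
  also have "\<dots> \<le> \<alpha> * F (T \<union> D)"
    using insert \<open>\<alpha> \<ge> 0\<close> by (intro mult_left_mono) auto
  also have "\<dots> \<le> F (T \<union> insert y D)"
    using grow[of "T \<union> D" y] insert by auto
  finally show ?case .
qed simp

definition extensions :: "'e \<Rightarrow> nat \<Rightarrow> ('e \<Rightarrow> nat) set \<Rightarrow> ('e \<Rightarrow> nat) set" where
  "extensions x k G = (\<lambda>(c, f). f(x := c)) ` ({..<k} \<times> G)"

lemma card_extensions:
  assumes "x \<notin> S" "G \<subseteq> S \<rightarrow>\<^sub>E B"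
  shows "card (extensions x k G) = k * card G"
proof -
  have "inj_on (\<lambda>(c, f). f(x := c)) ({..<k} \<times> G)"
    using inj_combinator[OF \<open>x \<notin> S\<close>, of "\<lambda>_. UNIV"]
    by (rule inj_on_subset) (use assms(2) in \<open>auto simp: PiE_iff\<close>)
  then show ?thesis by (simp add: extensions_def card_image card_cartesian_product)
qed

lemma extensions_subset_PiE: "G \<subseteq> S \<rightarrow>\<^sub>E {..<k} \<Longrightarrow> extensions x k G \<subseteq> insert x S \<rightarrow>\<^sub>E {..<k}"
  by (auto simp: extensions_def intro!: PiE_fun_upd)

lemma PiE_eq_if_copies_agree:
  assumes "g1 \<in> A \<rightarrow>\<^sub>E C" "g2 \<in> A \<rightarrow>\<^sub>E C" "\<And>y. y \<in> A - set H \<Longrightarrow> g1 y = g2 y"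
    and "map g1 H = map g1 R" "map g2 H = map g2 R" "length H = length R" "set R \<subseteq> A - set H"
  shows "g1 = g2"
proof
  fix y
  consider "y \<notin> A" | "y \<in> A - set H" | "y \<in> set H" by blast
  then show "g1 y = g2 y"
  proof cases
    case 1
    then show ?thesis using assms(1,2) by (metis PiE_arb)
  next
    case 2
    then show ?thesis by (rule assms(3))
  next
    case 3
    then obtain j where j: "j < length H" "y = H ! j" by (auto simp: in_set_conv_nth)
    then have "R ! j \<in> A - set H" using assms(6,7) by (metis nth_mem subsetD)
    then have "g1 (R ! j) = g2 (R ! j)" using assms(3) by blast
    then show ?thesis
      using j assms(6) arg_cong[OF assms(4), of "\<lambda>xs. xs ! j"] arg_cong[OF assms(5), of "\<lambda>xs. xs ! j"]
      by simp
  qed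
qed

lemma card_square_extensions_le_off_half:
  fixes Q :: "'e list set" and k :: nat
  defines "good \<equiv> square_free_colourings Q k"
  assumes "finite S" "x \<in> set H" "length H = length R" "set R \<subseteq> insert x S - set H"
    and copies: "\<And>g :: 'e \<Rightarrow> nat. is_square (map g q) \<Longrightarrow> map g H = map g R"
  shows "card {g \<in> extensions x k (good S). is_square (map g q)} \<le> card (good (insert x S - set H))"
proof -
  define B where "B = {g \<in> extensions x k (good S). is_square (map g q)}"
  define T where "T = insert x S - set H"
  have "T \<subseteq> S" using \<open>x \<in> set H\<close> by (auto simp: T_def)
  have "extensions x k (good S) \<subseteq> insert x S \<rightarrow>\<^sub>E {..<k}"
    by (rule extensions_subset_PiE) (auto simp: good_def square_free_colourings_def)
  then have B_PiE: "B \<subseteq> insert x S \<rightarrow>\<^sub>E {..<k}"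
    unfolding B_def by blast
  \<comment> \<open>a square on q is determined by its values off the half H of q\<close>
  have "inj_on (\<lambda>g. restrict g T) B"
  proof (rule inj_onI)
    fix g1 g2 assume g: "g1 \<in> B" "g2 \<in> B" and eq: "restrict g1 T = restrict g2 T"
    have sq: "is_square (map g1 q)" "is_square (map g2 q)" using g by (auto simp: B_def)
    show "g1 = g2"
    proof (rule PiE_eq_if_copies_agree)
      show "g1 \<in> insert x S \<rightarrow>\<^sub>E {..<k}" "g2 \<in> insert x S \<rightarrow>\<^sub>E {..<k}" using B_PiE g by auto
      show "g1 y = g2 y" if "y \<in> insert x S - set H" for y
        using fun_cong[OF eq, of y] that by (simp add: T_def)
      show "map g1 H = map g1 R" "map g2 H = map g2 R" by (fact copies[OF sq(1)], fact copies[OF sq(2)])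
    qed (use assms in auto)
  qed
  moreover have "(\<lambda>g. restrict g T) ` B \<subseteq> good T"
  proof
    fix h assume "h \<in> (\<lambda>g. restrict g T) ` B"
    then obtain f c where fc: "f \<in> good S" "h = restrict (f(x := c)) T"
      by (auto simp: B_def extensions_def)
    then have "h = restrict f T" using \<open>x \<in> set H\<close> by (auto simp: T_def restrict_def)
    then show "h \<in> good T"
      using restrict_in_square_free_colourings fc \<open>T \<subseteq> S\<close> unfolding good_def by blast
  qed
  moreover have "finite (good T)"
    using \<open>finite S\<close> \<open>T \<subseteq> S\<close> unfolding good_def
    by (metis finite_square_free_colourings finite_subset)
  ultimately show ?thesis unfolding B_def T_def by (rule card_inj_on_le)
qed

lemma card_square_extensions_le:
  fixes Q :: "'e list set" and k :: nat and \<alpha> :: real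
  defines "good \<equiv> square_free_colourings Q k"
  assumes "finite S" "x \<notin> S" "\<alpha> > 0"
    and grow: "\<And>T y. T \<subseteq> S \<Longrightarrow> y \<in> S - T \<Longrightarrow> \<alpha> * card (good T) \<le> card (good (insert y T))"
    and q: "distinct q" "even (length q)" "x \<in> set q" "set q \<subseteq> insert x S"
  shows "\<alpha> ^ (length q div 2 - 1) * card {g \<in> extensions x k (good S). is_square (map g q)}
         \<le> card (good S)"
proof -
  obtain H R where HR: "length H = length q div 2" "length R = length q div 2" "distinct H"
    "x \<in> set H" "set H \<inter> set R = {}" "set H \<union> set R = set q"
    "\<And>g :: 'e \<Rightarrow> nat. is_square (map g q) \<Longrightarrow> map g H = map g R"
    using square_halves[OF q(1-3)] by metis
  define T where "T = insert x S - set H"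
  define D where "D = set H - {x}"
  have "T \<union> D = S" "T \<inter> D = {}" "D \<subseteq> S" "T \<subseteq> S"
    using HR q \<open>x \<notin> S\<close> by (auto simp: T_def D_def)
  moreover have "card D = length q div 2 - 1"
    using HR by (simp add: D_def distinct_card)
  moreover have "finite D"
    using \<open>D \<subseteq> S\<close> \<open>finite S\<close> by (rule finite_subset)
  ultimately have "\<alpha> ^ (length q div 2 - 1) * card (good T) \<le> card (good S)"
    using growth_iterate[where F = "\<lambda>T. real (card (good T))" and D = D and T = T, OF grow] \<open>\<alpha> > 0\<close>
    by simp
  moreover have "card {g \<in> extensions x k (good S). is_square (map g q)} \<le> card (good T)"
    unfolding good_def T_def
    by (rule card_square_extensions_le_off_half) (use HR q \<open>finite S\<close> in auto)
  ultimately show ?thesis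
    using \<open>\<alpha> > 0\<close> by (meson mult_left_mono of_nat_le_iff order_trans zero_le_power less_imp_le)
qed

lemma extensions_subset_square_free_Un_squares:
  fixes Q :: "'e list set" and k :: nat
  defines "good \<equiv> square_free_colourings Q k"
  assumes "x \<notin> S"
  shows "extensions x k (good S) \<subseteq>
    good (insert x S) \<union>
    (\<Union>q \<in> {q \<in> Q. set q \<subseteq> insert x S \<and> x \<in> set q}. {g \<in> extensions x k (good S). is_square (map g q)})"
proof
  fix g assume g: "g \<in> extensions x k (good S)"
  then obtain f c where f: "f \<in> good S" "g = f(x := c)" by (auto simp: extensions_def)
  show "g \<in> good (insert x S) \<union> (\<Union>q \<in> {q \<in> Q. set q \<subseteq> insert x S \<and> x \<in> set q}.
          {g \<in> extensions x k (good S). is_square (map g q)})"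
  proof (cases "g \<in> good (insert x S)")
    case False
    moreover have "g \<in> insert x S \<rightarrow>\<^sub>E {..<k}"
      using g extensions_subset_PiE[of "good S" S k x] by (auto simp: good_def square_free_colourings_def)
    ultimately obtain q where q: "q \<in> Q" "set q \<subseteq> insert x S" "is_square (map g q)"
      by (auto simp: good_def square_free_colourings_def)
    \<comment> \<open>f is square-free on S, so the new square must use x\<close>
    have "x \<in> set q"
    proof (rule ccontr)
      assume "x \<notin> set q"
      then have "set q \<subseteq> S" "map g q = map f q" using q f by auto
      moreover have "\<not> is_square (map f q)"
        using f(1) q(1) \<open>set q \<subseteq> S\<close> by (auto simp: good_def square_free_colourings_def)
      ultimately show False using q(3) by metis
    qed
    then show ?thesis using q g by auto
  qed simp
qed

lemma card_square_free_colourings_insert_ge: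
  fixes Q :: "'e list set" and k :: nat and \<alpha> :: real
  defines "good \<equiv> square_free_colourings Q k"
  assumes "finite U" "S \<subseteq> U" "x \<in> U" "x \<notin> S" "\<alpha> > 0"
    and shape: "\<And>q. q \<in> Q \<Longrightarrow> distinct q \<and> even (length q)"
    and weight: "(\<Sum>q | q \<in> Q \<and> set q \<subseteq> U \<and> x \<in> set q. (1/\<alpha>) ^ (length q div 2 - 1)) \<le> k - \<alpha>"
    and grow: "\<And>T y. T \<subseteq> S \<Longrightarrow> y \<in> S - T \<Longrightarrow> \<alpha> * card (good T) \<le> card (good (insert y T))"
  shows "\<alpha> * card (good S) \<le> card (good (insert x S))"
proof -
  define B where "B q = {g \<in> extensions x k (good S). is_square (map g q)}" for q
  define Qx where "Qx = {q \<in> Q. set q \<subseteq> insert x S \<and> x \<in> set q}"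
  define Qb where "Qb = {q \<in> Q. set q \<subseteq> U \<and> x \<in> set q}"
  have "finite S" using \<open>S \<subseteq> U\<close> \<open>finite U\<close> by (rule finite_subset)
  have "finite Qb"
    by (rule finite_subset[OF _ finite_subset_distinct[OF \<open>finite U\<close>]]) (auto simp: Qb_def shape)
  moreover have "Qx \<subseteq> Qb" using \<open>S \<subseteq> U\<close> \<open>x \<in> U\<close> by (auto simp: Qx_def Qb_def)
  ultimately have "finite Qx" using finite_subset by blast
  have "finite (extensions x k (good S))"
    using finite_square_free_colourings[OF \<open>finite S\<close>] by (simp add: extensions_def good_def)
  have card_B: "card (B q) \<le> card (good S) * (1/\<alpha>) ^ (length q div 2 - 1)" if "q \<in> Qx" for q
  proof -
    have "\<alpha> ^ (length q div 2 - 1) * card (B q) \<le> card (good S)"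
      using card_square_extensions_le[OF \<open>finite S\<close> \<open>x \<notin> S\<close> \<open>\<alpha> > 0\<close> grow[unfolded good_def]]
        that shape unfolding B_def Qx_def good_def by blast
    then show ?thesis using \<open>\<alpha> > 0\<close> by (simp add: field_simps power_one_over)
  qed
  have "good S \<subseteq> S \<rightarrow>\<^sub>E {..<k}" by (auto simp: good_def square_free_colourings_def)
  then have "k * card (good S) = card (extensions x k (good S))"
    using card_extensions[OF \<open>x \<notin> S\<close>] by metis
  also have "\<dots> \<le> card (good (insert x S) \<union> (\<Union>q\<in>Qx. B q))"
    using extensions_subset_square_free_Un_squares[where Q = Q and k = k, OF \<open>x \<notin> S\<close>] \<open>finite Qx\<close> \<open>finite S\<close>
      \<open>finite (extensions x k (good S))\<close>
    by (intro card_mono) (auto simp: good_def B_def Qx_def intro: finite_square_free_colourings)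
  also have "\<dots> \<le> card (good (insert x S)) + (\<Sum>q\<in>Qx. card (B q))"
    using card_Un_le[of "good (insert x S)" "\<Union>q\<in>Qx. B q"] card_UN_le[OF \<open>finite Qx\<close>, of B]
    by linarith
  finally have "real (k * card (good S)) \<le> card (good (insert x S)) + (\<Sum>q\<in>Qx. card (B q))"
    by (metis of_nat_le_iff of_nat_add of_nat_sum)
  also have "\<dots> \<le> card (good (insert x S)) + card (good S) * (\<Sum>q\<in>Qx. (1/\<alpha>) ^ (length q div 2 - 1))"
    using card_B by (simp add: sum_distrib_left sum_mono)
  also have "\<dots> \<le> card (good (insert x S)) + card (good S) * (\<Sum>q\<in>Qb. (1/\<alpha>) ^ (length q div 2 - 1))"
    using \<open>Qx \<subseteq> Qb\<close> \<open>finite Qb\<close> \<open>\<alpha> > 0\<close> by (intro add_left_mono mult_left_mono sum_mono2) auto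
  also have "\<dots> \<le> card (good (insert x S)) + card (good S) * (k - \<alpha>)"
    using weight by (intro add_left_mono mult_left_mono) (auto simp: Qb_def)
  finally show ?thesis by (simp add: algebra_simps)
qed

lemma card_square_free_colourings_grow:
  fixes Q :: "'e list set" and k :: nat and \<alpha> :: real
  defines "good \<equiv> square_free_colourings Q k"
  assumes "finite U" "\<alpha> > 0"
    and shape: "\<And>q. q \<in> Q \<Longrightarrow> distinct q \<and> even (length q)"
    and weight: "\<And>x. x \<in> U \<Longrightarrow>
      (\<Sum>q | q \<in> Q \<and> set q \<subseteq> U \<and> x \<in> set q. (1/\<alpha>) ^ (length q div 2 - 1)) \<le> k - \<alpha>"
  shows "S \<subseteq> U \<Longrightarrow> x \<in> U - S \<Longrightarrow> \<alpha> * card (good S) \<le> card (good (insert x S))"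
proof (induction "card S" arbitrary: S x rule: less_induct)
  case less
  have "\<alpha> * card (good T) \<le> card (good (insert y T))" if "T \<subseteq> S" "y \<in> S - T" for T y
  proof (rule less.hyps)
    have "finite S" using less.prems(1) \<open>finite U\<close> by (rule finite_subset)
    then show "card T < card S"
      using that by (intro psubset_card_mono) auto
  qed (use that less.prems in auto)
  then show ?case
    using card_square_free_colourings_insert_ge[OF \<open>finite U\<close>, of S x \<alpha> Q k] less.prems shape
      weight[of x] \<open>\<alpha> > 0\<close> unfolding good_def by blast
qed

theorem square_free_colouring_exists:
  fixes Q :: "'e list set" and k :: nat and \<alpha> :: real
  defines "good \<equiv> square_free_colourings Q k"
  assumes "finite U" "\<alpha> \<ge> 1"
    and shape: "\<And>q. q \<in> Q \<Longrightarrow> q \<noteq> [] \<and> distinct q \<and> even (length q)"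
    and weight: "\<And>x. x \<in> U \<Longrightarrow>
      (\<Sum>q | q \<in> Q \<and> set q \<subseteq> U \<and> x \<in> set q. (1/\<alpha>) ^ (length q div 2 - 1)) \<le> k - \<alpha>"
  shows "good U \<noteq> {}"
proof -
  have "good S \<noteq> {}" if "finite S" "S \<subseteq> U" for S
    using that
  proof (induction S rule: finite_induct)
    case empty
    have "(\<lambda>_. undefined) \<in> good {}"
      using shape by (auto simp: good_def square_free_colourings_def)
    then show ?case by blast
  next
    case (insert x S)
    then have "1 \<le> card (good S)"
      using finite_square_free_colourings[OF \<open>finite S\<close>]
      by (simp add: good_def Suc_le_eq card_gt_0_iff)
    then have "1 \<le> \<alpha> * card (good S)"
      using \<open>\<alpha> \<ge> 1\<close> by (metis mult_mono' mult_1 of_nat_1 of_nat_le_iff zero_le_one)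
    also have "\<dots> \<le> card (good (insert x S))"
      using card_square_free_colourings_grow[OF \<open>finite U\<close>, of \<alpha> Q k S x] insert shape weight
        \<open>\<alpha> \<ge> 1\<close> unfolding good_def by simp
    finally show ?case by auto
  qed
  then show ?thesis using \<open>finite U\<close> by blast
qed

section \<open>Total sequences of paths\<close>

definition total_list :: "'a list \<Rightarrow> ('a + 'a set) list" where
  "total_list w = total_seq id w"

lemma total_list_simps [simp]:
  "total_list [] = []" "total_list [v] = [Inl v]"
  "total_list (v # w # vs) = Inl v # Inr {v, w} # total_list (w # vs)"
  by (simp_all add: total_list_def)

lemma total_seq_eq_map: "total_seq c w = map c (total_list w)"
  unfolding total_list_def by (induction c w rule: total_seq.induct) auto

lemma path_edges_simps [simp]:
  "path_edges [] = []" "path_edges [v] = []"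
  "path_edges (v # w # vs) = {v, w} # path_edges (w # vs)"
  by (simp_all add: path_edges_def upt_conv_Cons map_Suc_upt[symmetric] del: upt_Suc)

lemma length_path_edges [simp]: "length (path_edges w) = length w - 1"
  by (simp add: path_edges_def)

lemma length_total_list [simp]: "length (total_list w) = 2 * length w - 1"
  by (induction w rule: induct_list012) auto

lemma set_total_list: "set (total_list w) = Inl ` set w \<union> Inr ` set (path_edges w)"
  by (induction w rule: induct_list012) auto

lemma path_edge_subset: "e \<in> set (path_edges w) \<Longrightarrow> e \<subseteq> set w"
  by (induction w rule: induct_list012) auto

lemma distinct_path_edges: "distinct w \<Longrightarrow> distinct (path_edges w)"
  by (induction w rule: induct_list012) (auto dest: path_edge_subset)

lemma distinct_total_list: "distinct w \<Longrightarrow> distinct (total_list w)"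
  by (induction w rule: induct_list012) (auto simp: set_total_list dest: path_edge_subset)

lemma drop_path_edges: "drop i (path_edges w) = path_edges (drop i w)"
  by (induction w arbitrary: i rule: induct_list012) (auto simp: drop_Cons' Suc_diff_Suc)

lemma take_path_edges: "take m (path_edges w) = path_edges (take (Suc m) w)"
  by (induction w arbitrary: m rule: induct_list012) (auto simp: take_Cons')

lemma drop_total_list: "drop (2 * i) (total_list w) = total_list (drop i w)"
proof (induction w arbitrary: i rule: induct_list012)
  case (3 v w vs)
  then show ?case by (cases i) auto
qed (auto simp: drop_Cons')

lemma take_total_list: "take (Suc (2 * n)) (total_list w) = total_list (take (Suc n) w)"
proof (induction w arbitrary: n rule: induct_list012)
  case (3 v w vs)
  then show ?case by (cases n) auto
qed auto

lemma is_path_Cons_Cons: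
  "is_path V E (v # w # vs) \<longleftrightarrow>
     v \<in> V \<and> v \<notin> set (w # vs) \<and> {v, w} \<in> E \<and> is_path V E (w # vs)"
proof -
  define P where "P xs \<longleftrightarrow> (\<forall>i. Suc i < length xs \<longrightarrow> {xs ! i, xs ! Suc i} \<in> E)" for xs
  have "P (v # w # vs) \<longleftrightarrow> {v, w} \<in> E \<and> P (w # vs)"
  proof
    assume "P (v # w # vs)"
    then show "{v, w} \<in> E \<and> P (w # vs)"
      unfolding P_def by (metis Suc_less_eq length_Cons nth_Cons_0 nth_Cons_Suc zero_less_Suc)
  next
    assume *: "{v, w} \<in> E \<and> P (w # vs)"
    show "P (v # w # vs)"
      unfolding P_def
    proof (intro allI impI)
      fix i assume "Suc i < length (v # w # vs)"
      with * show "{(v # w # vs) ! i, (v # w # vs) ! Suc i} \<in> E"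
        by (cases i) (auto simp: P_def)
    qed
  qed
  then show ?thesis by (auto simp: is_path_def P_def)
qed

lemma is_path_take_drop:
  assumes "is_path V E w" "1 \<le> m" "i + m \<le> length w"
  shows "is_path V E (take m (drop i w))"
proof -
  have "{take m (drop i w) ! j, take m (drop i w) ! Suc j} \<in> E"
    if "Suc j < length (take m (drop i w))" for j
  proof -
    have "Suc (i + j) < length w" using that by (simp add: less_diff_conv add.commute)
    then have "{w ! (i + j), w ! Suc (i + j)} \<in> E"
      using assms(1) unfolding is_path_def by blast
    moreover have "i \<le> length w" using \<open>Suc (i + j) < length w\<close> by simp
    ultimately show ?thesis using that by (simp add: nth_drop)
  qed
  moreover have "set (take m (drop i w)) \<subseteq> V"
    using assms(1) by (meson in_set_dropD in_set_takeD is_path_def subset_iff)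
  ultimately show ?thesis using assms by (auto simp: is_path_def)
qed

lemma is_path_rev: "is_path V E w \<Longrightarrow> is_path V E (rev w)"
proof -
  assume w: "is_path V E w"
  have "{rev w ! j, rev w ! Suc j} \<in> E" if "Suc j < length w" for j
  proof -
    define i where "i = length w - Suc (Suc j)"
    have "{w ! i, w ! Suc i} \<in> E" using w that by (simp add: is_path_def i_def)
    moreover have "rev w ! j = w ! Suc i" "rev w ! Suc j = w ! i"
      using that by (auto simp: rev_nth i_def Suc_diff_Suc)
    ultimately show ?thesis by (simp add: insert_commute)
  qed
  then show ?thesis using w by (auto simp: is_path_def)
qed

lemma set_path_edges_subset: "is_path V E w \<Longrightarrow> set (path_edges w) \<subseteq> E"
  by (induction w rule: induct_list012) (auto simp: is_path_Cons_Cons)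

section \<open>Counting paths through a vertex\<close>

definition paths_from :: "'a set \<Rightarrow> 'a set set \<Rightarrow> nat \<Rightarrow> 'a \<Rightarrow> 'a list set" where
  "paths_from V E m u = {w. is_path V E w \<and> length w = m \<and> hd w = u}"

definition paths_through :: "'a set \<Rightarrow> 'a set set \<Rightarrow> nat \<Rightarrow> 'a \<Rightarrow> 'a list set" where
  "paths_through V E m u = {w. is_path V E w \<and> length w = m \<and> u \<in> set w}"

lemma finite_paths_from: "finite V \<Longrightarrow> finite (paths_from V E m u)"
  by (rule finite_subset[OF _ finite_lists_length_eq[of V m]]) (auto simp: is_path_def paths_from_def)

lemma finite_paths_through: "finite V \<Longrightarrow> finite (paths_through V E m u)"
  by (rule finite_subset[OF _ finite_lists_length_eq[of V m]]) (auto simp: is_path_def paths_through_def)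

lemma simple_graph_edge:
  assumes "simple_graph V E" "{u, v} \<in> E"
  shows "u \<in> V" "v \<in> V" "u \<noteq> v"
  using assms by (auto simp: simple_graph_def doubleton_eq_iff)

lemma finite_edges: "simple_graph V E \<Longrightarrow> finite E"
  unfolding simple_graph_def by (rule finite_subset[of E "Pow V"]) auto

lemma card_neighbours_le_max_degree:
  assumes "simple_graph V E"
  shows "card {v. {u, v} \<in> E} \<le> max_degree V E"
proof (cases "u \<in> V")
  case False
  then have "{v. {u, v} \<in> E} = {}" using simple_graph_edge[OF assms] by blast
  then show ?thesis by simp
next
  case True
  have "card {v. {u, v} \<in> E} \<le> card {e \<in> E. u \<in> e}"
    by (rule card_inj_on_le[of "\<lambda>v. {u, v}"])
      (auto simp: inj_on_def doubleton_eq_iff finite_edges[OF assms])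
  also have "\<dots> \<le> max_degree V E"
    unfolding max_degree_def degree_def[symmetric]
    using True assms by (intro Max_ge) (auto simp: simple_graph_def)
  finally show ?thesis .
qed

lemma card_paths_from_le:
  assumes "simple_graph V E"
  shows "card (paths_from V E (Suc m) u) \<le> max_degree V E ^ m"
proof (induction m arbitrary: u)
  case 0
  have "paths_from V E (Suc 0) u \<subseteq> {[u]}" by (auto simp: paths_from_def length_Suc_conv)
  then have "card (paths_from V E (Suc 0) u) \<le> card {[u]}" by (intro card_mono) auto
  then show ?case by simp
next
  case (Suc m)
  define N where "N = {v. {u, v} \<in> E}"
  have "finite V" using assms by (simp add: simple_graph_def)
  have "finite N"
    using simple_graph_edge[OF assms] by (auto intro: finite_subset[OF _ \<open>finite V\<close>] simp: N_def)
  have "paths_from V E (Suc (Suc m)) u \<subseteq> (\<lambda>w. u # w) ` (\<Union>v\<in>N. paths_from V E (Suc m) v)"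
  proof
    fix w assume "w \<in> paths_from V E (Suc (Suc m)) u"
    then obtain v vs where "w = u # v # vs" "is_path V E (u # v # vs)" "length vs = m"
      by (auto simp: paths_from_def length_Suc_conv)
    then show "w \<in> (\<lambda>w. u # w) ` (\<Union>v\<in>N. paths_from V E (Suc m) v)"
      by (auto simp: is_path_Cons_Cons paths_from_def N_def)
  qed
  moreover have "finite (\<Union>v\<in>N. paths_from V E (Suc m) v)"
    using \<open>finite N\<close> \<open>finite V\<close> by (simp add: finite_paths_from)
  ultimately have "card (paths_from V E (Suc (Suc m)) u) \<le> card (\<Union>v\<in>N. paths_from V E (Suc m) v)"
    using card_image_le card_mono finite_imageI order_trans by metis
  also have "\<dots> \<le> (\<Sum>v\<in>N. card (paths_from V E (Suc m) v))"
    using \<open>finite N\<close> by (rule card_UN_le)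
  also have "\<dots> \<le> card N * max_degree V E ^ m"
    using Suc.IH sum_bounded_above[of N "\<lambda>v. card (paths_from V E (Suc m) v)"] by auto
  also have "\<dots> \<le> max_degree V E ^ Suc m"
    using card_neighbours_le_max_degree[OF assms, of u] by (simp add: N_def)
  finally show ?case .
qed

lemma card_paths_through_le:
  assumes "simple_graph V E"
  shows "card (paths_through V E (Suc m) u) \<le> Suc m * max_degree V E ^ m"
proof -
  have "finite V" using assms by (simp add: simple_graph_def)
  \<comment> \<open>a path through u is glued from two paths starting at u\<close>
  define F where "F j = (\<lambda>(a, b). rev a @ tl b) ` (paths_from V E (Suc j) u \<times> paths_from V E (Suc m - j) u)"
    for j
  have cover: "paths_through V E (Suc m) u \<subseteq> (\<Union>j\<le>m. F j)"
  proof
    fix w assume "w \<in> paths_through V E (Suc m) u"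
    then have w: "is_path V E w" "length w = Suc m" "u \<in> set w" by (auto simp: paths_through_def)
    then obtain j where j: "j \<le> m" "w ! j = u" by (metis in_set_conv_nth less_Suc_eq_le)
    have "take (Suc j) w = take j w @ [u]"
      using j w by (simp add: take_Suc_conv_app_nth)
    then have "rev (take (Suc j) w) \<in> paths_from V E (Suc j) u"
      using is_path_rev[OF is_path_take_drop[OF w(1), of "Suc j" 0]] w j
      by (simp add: paths_from_def)
    moreover have "drop j w \<in> paths_from V E (Suc m - j) u"
      using is_path_take_drop[OF w(1), of "Suc m - j" j] w j by (simp add: paths_from_def hd_drop_conv_nth)
    moreover have "w = rev (rev (take (Suc j) w)) @ tl (drop j w)"
      by (simp add: tl_drop flip: drop_Suc)
    ultimately have "w \<in> F j" unfolding F_def by (auto intro!: image_eqI)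
    then show "w \<in> (\<Union>j\<le>m. F j)" using j by blast
  qed
  have card_F: "card (F j) \<le> max_degree V E ^ m" if "j \<le> m" for j
  proof -
    have "card (F j) \<le> card (paths_from V E (Suc j) u \<times> paths_from V E (Suc m - j) u)"
      unfolding F_def by (rule card_image_le) (simp add: finite_paths_from \<open>finite V\<close>)
    also have "\<dots> = card (paths_from V E (Suc j) u) * card (paths_from V E (Suc (m - j)) u)"
      using that by (simp add: card_cartesian_product Suc_diff_le)
    also have "\<dots> \<le> max_degree V E ^ j * max_degree V E ^ (m - j)"
      by (intro mult_le_mono card_paths_from_le[OF assms])
    also have "\<dots> = max_degree V E ^ m" using that by (simp flip: power_add)
    finally show ?thesis .
  qed
  have "finite (F j)" for j by (simp add: F_def finite_paths_from \<open>finite V\<close>)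
  then have "card (paths_through V E (Suc m) u) \<le> card (\<Union>j\<le>m. F j)"
    using cover by (intro card_mono) auto
  also have "\<dots> \<le> (\<Sum>j\<le>m. card (F j))"
    by (rule card_UN_le) simp
  also have "\<dots> \<le> (\<Sum>j\<le>m. max_degree V E ^ m)"
    using card_F by (intro sum_mono) auto
  finally show ?thesis by simp
qed

section \<open>Square candidates of a graph\<close>

definition even_blocks :: "'c list \<Rightarrow> 'c list set" where
  "even_blocks xs = {take (2 * n) (drop i xs) | i n. 1 \<le> n \<and> i + 2 * n \<le> length xs}"

lemma nonrepetitive_iff_even_blocks:
  "nonrepetitive xs \<longleftrightarrow> (\<forall>q \<in> even_blocks xs. \<not> is_square q)"
proof -
  have "is_square (take (2 * n) (drop i xs)) \<longleftrightarrow> take n (drop i xs) = take n (drop (i + n) xs)"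
    if "i + 2 * n \<le> length xs" for i n
  proof -
    have "length (take (2 * n) (drop i xs)) div 2 = n" using that by simp
    moreover have "drop n (take (2 * n) (drop i xs)) = take n (drop (i + n) xs)"
      by (simp add: drop_take mult_2 add.commute)
    ultimately show ?thesis by (simp add: is_square_def)
  qed
  then show ?thesis unfolding nonrepetitive_def even_blocks_def by blast
qed

lemma even_blocks_map: "even_blocks (map f xs) = map f ` even_blocks xs"
  by (auto simp: even_blocks_def take_map drop_map)

lemma nonrepetitive_map_if_square_free:
  assumes "f \<in> square_free_colourings Q k U" "set ys \<subseteq> U" "even_blocks ys \<subseteq> Q"
  shows "nonrepetitive (map f ys)"
proof -
  have "set q \<subseteq> U" if "q \<in> even_blocks ys" for q
    using that assms(2) by (auto simp: even_blocks_def dest: in_set_takeD in_set_dropD)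
  then show ?thesis
    using assms by (auto simp: nonrepetitive_iff_even_blocks even_blocks_map square_free_colourings_def)
qed

lemma even_block_shape:
  assumes "q \<in> even_blocks xs" "distinct xs"
  shows "q \<noteq> [] \<and> distinct q \<and> even (length q)"
  using assms by (auto simp: even_blocks_def)

text \<open>A block of a total list starts at a vertex or at an edge according to the parity of i.\<close>

lemma even_block_total_list:
  "take (2 * n) (drop i (total_list w)) =
     take (2 * n) (drop (i mod 2) (total_list (take (Suc n) (drop (i div 2) w))))"
proof -
  define r where "r = i mod 2"
  have "take (2 * n) (drop i (total_list w)) = take (2 * n) (drop r (total_list (drop (i div 2) w)))"
    by (simp add: r_def drop_drop flip: drop_total_list)
  also have "\<dots> = take (2 * n) (drop r (take (Suc (2 * n)) (total_list (drop (i div 2) w))))"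
    using mod_less_eq_dividend[of i 2] by (simp add: r_def take_drop min_def)
  also have "\<dots> = take (2 * n) (drop r (total_list (take (Suc n) (drop (i div 2) w))))"
    by (simp only: take_total_list)
  finally show ?thesis by (simp only: r_def)
qed

definition anchor :: "'a + 'a set \<Rightarrow> 'a" where
  "anchor x = (case x of Inl v \<Rightarrow> v | Inr e \<Rightarrow> (SOME v. v \<in> e))"

lemma anchor_mem: "x \<in> set (total_list w) \<Longrightarrow> anchor x \<in> set w"
proof (induction w rule: induct_list012)
  case (3 v w vs)
  have "(SOME u. u \<in> {v, w}) \<in> {v, w}" by (rule someI[of _ v]) simp
  with 3 show ?case by (auto simp: anchor_def)
qed (auto simp: anchor_def)

definition path_sequences :: "'a set \<Rightarrow> 'a set set \<Rightarrow> ('a + 'a set) list set" where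
  "path_sequences V E =
     (\<Union>w \<in> {w. is_path V E w}. {map Inl w, map Inr (path_edges w), total_list w})"

definition square_candidates :: "'a set \<Rightarrow> 'a set set \<Rightarrow> ('a + 'a set) list set" where
  "square_candidates V E = (\<Union>xs \<in> path_sequences V E. even_blocks xs)"

lemma path_sequencesD:
  assumes "xs \<in> path_sequences V E"
  shows "distinct xs" "set xs \<subseteq> Inl ` V \<union> Inr ` E"
proof -
  obtain w where w: "is_path V E w" "xs \<in> {map Inl w, map Inr (path_edges w), total_list w}"
    using assms by (auto simp: path_sequences_def)
  then have "distinct w" "set w \<subseteq> V" by (auto simp: is_path_def)
  with w show "distinct xs"
    by (auto simp: distinct_map distinct_path_edges distinct_total_list inj_on_def)
  show "set xs \<subseteq> Inl ` V \<union> Inr ` E"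
    using w \<open>set w \<subseteq> V\<close> set_path_edges_subset[OF w(1)] by (force simp: set_total_list)
qed

lemma square_candidate_shape:
  "q \<in> square_candidates V E \<Longrightarrow> q \<noteq> [] \<and> distinct q \<and> even (length q)"
  unfolding square_candidates_def using even_block_shape path_sequencesD(1) by blast

lemma subpath_in_paths_through:
  assumes "is_path V E w" "1 \<le> m" "j + m \<le> length w" "x \<in> set (total_list (take m (drop j w)))"
  shows "take m (drop j w) \<in> paths_through V E m (anchor x)"
  using assms is_path_take_drop[OF assms(1-3)] anchor_mem by (auto simp: paths_through_def)

lemma even_block_of_vertices_through:
  assumes "is_path V E w" "q \<in> even_blocks (map Inl w)" "length q = 2 * l" "x \<in> set q"
  shows "q \<in> map Inl ` paths_through V E (2 * l) (anchor x)"
proof -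
  obtain i where i: "q = map Inl (take (2 * l) (drop i w))" "1 \<le> l" "i + 2 * l \<le> length w"
    using assms(2,3) by (auto simp: even_blocks_def take_map drop_map)
  then have "x \<in> set (total_list (take (2 * l) (drop i w)))"
    using assms(4) by (auto simp: set_total_list)
  then show ?thesis using subpath_in_paths_through[OF assms(1)] i by auto
qed

lemma even_block_of_edges_through:
  assumes "is_path V E w" "q \<in> even_blocks (map Inr (path_edges w))" "length q = 2 * l" "x \<in> set q"
  shows "q \<in> (\<lambda>w. map Inr (path_edges w)) ` paths_through V E (Suc (2 * l)) (anchor x)"
proof -
  obtain i where i: "q = map Inr (path_edges (take (Suc (2 * l)) (drop i w)))" "1 \<le> l"
    "i + Suc (2 * l) \<le> length w"
    using assms(2,3) by (auto simp: even_blocks_def take_map drop_map drop_path_edges take_path_edges)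
  then have "x \<in> set (total_list (take (Suc (2 * l)) (drop i w)))"
    using assms(4) by (auto simp: set_total_list)
  then show ?thesis using subpath_in_paths_through[OF assms(1)] i by auto
qed

lemma even_block_of_total_list_through:
  assumes "is_path V E w" "q \<in> even_blocks (total_list w)" "length q = 2 * l" "x \<in> set q"
  shows "q \<in> (\<lambda>(r, w). take (2 * l) (drop r (total_list w))) `
               ({0, 1} \<times> paths_through V E (Suc l) (anchor x))"
proof -
  obtain i where i: "q = take (2 * l) (drop i (total_list w))" "1 \<le> l"
    "i + 2 * l \<le> length (total_list w)"
    using assms(2,3) by (auto simp: even_blocks_def)
  define w' where "w' = take (Suc l) (drop (i div 2) w)"
  have q: "q = take (2 * l) (drop (i mod 2) (total_list w'))"
    using i(1) even_block_total_list[of l i w] unfolding w'_def by (rule trans)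
  have "i div 2 + Suc l \<le> length w" using i(2,3) by simp
  have "x \<in> set (total_list w')"
    using assms(4) unfolding q by (auto dest: in_set_takeD in_set_dropD)
  then have "(i mod 2, w') \<in> {0, 1} \<times> paths_through V E (Suc l) (anchor x)"
    using subpath_in_paths_through[OF assms(1)] \<open>i div 2 + Suc l \<le> length w\<close> i(2)
    by (auto simp: w'_def)
  then show ?thesis unfolding q by (rule rev_image_eqI) simp
qed

lemma square_candidates_through_subset:
  "{q \<in> square_candidates V E. length q = 2 * l \<and> x \<in> set q} \<subseteq>
     map Inl ` paths_through V E (2 * l) (anchor x) \<union>
     (\<lambda>w. map Inr (path_edges w)) ` paths_through V E (Suc (2 * l)) (anchor x) \<union>
     (\<lambda>(r, w). take (2 * l) (drop r (total_list w))) ` ({0, 1} \<times> paths_through V E (Suc l) (anchor x))"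
  (is "_ \<subseteq> ?A \<union> ?B \<union> ?C")
proof
  fix q assume "q \<in> {q \<in> square_candidates V E. length q = 2 * l \<and> x \<in> set q}"
  then obtain w xs where q: "length q = 2 * l" "x \<in> set q" "q \<in> even_blocks xs"
    and w: "is_path V E w" "xs \<in> {map Inl w, map Inr (path_edges w), total_list w}"
    unfolding square_candidates_def path_sequences_def by blast
  from w(2) consider "xs = map Inl w" | "xs = map Inr (path_edges w)" | "xs = total_list w" by blast
  then show "q \<in> ?A \<union> ?B \<union> ?C"
  proof cases
    case 1
    then have "q \<in> ?A" using even_block_of_vertices_through[OF w(1)] q by simp
    then show ?thesis by blast
  next
    case 2
    then have "q \<in> ?B" using even_block_of_edges_through[OF w(1)] q by simp
    then show ?thesis by blast
  next
    case 3
    then have "q \<in> ?C" using even_block_of_total_list_through[OF w(1)] q by simp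
    then show ?thesis by blast
  qed
qed

lemma finite_square_candidates_through:
  "finite V \<Longrightarrow> finite {q \<in> square_candidates V E. length q = 2 * l \<and> x \<in> set q}"
  by (rule finite_subset[OF square_candidates_through_subset]) (simp add: finite_paths_through)

lemma card_square_candidates_through_le_paths:
  fixes V :: "'a set"
  assumes "simple_graph V E"
  shows "card {q \<in> square_candidates V E. length q = 2 * l \<and> x \<in> set q} \<le>
    card (paths_through V E (2 * l) (anchor x)) + card (paths_through V E (Suc (2 * l)) (anchor x))
      + 2 * card (paths_through V E (Suc l) (anchor x))"
proof -
  have "finite V" using assms by (simp add: simple_graph_def)
  let ?P = "\<lambda>m. paths_through V E m (anchor x)"
  define A :: "('a + 'a set) list set" where "A = map Inl ` ?P (2 * l)"
  define B :: "('a + 'a set) list set" where "B = (\<lambda>w. map Inr (path_edges w)) ` ?P (Suc (2 * l))"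
  define C :: "('a + 'a set) list set"
    where "C = (\<lambda>(r, w). take (2 * l) (drop r (total_list w))) ` ({0, 1} \<times> ?P (Suc l))"
  have "card {q \<in> square_candidates V E. length q = 2 * l \<and> x \<in> set q} \<le> card (A \<union> B \<union> C)"
    unfolding A_def B_def C_def
    by (rule card_mono[OF _ square_candidates_through_subset]) (simp add: finite_paths_through \<open>finite V\<close>)
  also have "\<dots> \<le> card A + card B + card C"
    by (rule order_trans[OF card_Un_le add_right_mono[OF card_Un_le]])
  also have "\<dots> \<le> card (?P (2 * l)) + card (?P (Suc (2 * l))) + card ({0 :: nat, 1} \<times> ?P (Suc l))"
    unfolding A_def B_def C_def
    by (intro add_mono card_image_le) (simp_all add: finite_paths_through \<open>finite V\<close>)
  also have "\<dots> = card (?P (2 * l)) + card (?P (Suc (2 * l))) + 2 * card (?P (Suc l))"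
    by (simp add: card_cartesian_product)
  finally show ?thesis .
qed

lemma path_count_le:
  fixes D l :: nat
  assumes "3 \<le> D" "1 \<le> l"
  shows "2 * l * D ^ (2 * l - 1) + Suc (2 * l) * D ^ (2 * l) + 2 * (Suc l * D ^ l)
    \<le> 5 * 2 ^ (l - 1) * D ^ (2 * l)"
proof -
  have pow1: "3 * D ^ (2 * l - 1) \<le> D ^ (2 * l)"
  proof -
    have "D ^ (2 * l) = D * D ^ (2 * l - 1)"
      using assms(2) by (simp flip: power_Suc)
    then show ?thesis using assms(1) by simp
  qed
  have powl: "3 * D ^ l \<le> D ^ (2 * l)"
  proof -
    have "D \<le> D ^ l" using assms by (intro self_le_power) auto
    then have "3 \<le> D ^ l" using assms by linarith
    then show ?thesis by (simp add: mult_2 power_add)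
  qed
  have exp: "10 * l + 5 \<le> 15 * 2 ^ (l - 1)"
    using assms(2)
  proof (induction l rule: dec_induct)
    case (step m)
    then show ?case by (cases m) auto
  qed simp
  have "3 * (2 * l * D ^ (2 * l - 1) + Suc (2 * l) * D ^ (2 * l) + 2 * (Suc l * D ^ l))
     = 2 * l * (3 * D ^ (2 * l - 1)) + 3 * Suc (2 * l) * D ^ (2 * l) + 2 * Suc l * (3 * D ^ l)"
    by (simp add: algebra_simps)
  also have "\<dots> \<le> 2 * l * D ^ (2 * l) + 3 * Suc (2 * l) * D ^ (2 * l) + 2 * Suc l * D ^ (2 * l)"
    using pow1 powl by (intro add_mono mult_le_mono2) auto
  also have "\<dots> = (10 * l + 5) * D ^ (2 * l)" by (simp add: algebra_simps)
  also have "\<dots> \<le> 15 * 2 ^ (l - 1) * D ^ (2 * l)" using exp by (rule mult_le_mono1)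
  finally show ?thesis by simp
qed

lemma card_square_candidates_through_le:
  assumes "simple_graph V E" "3 \<le> max_degree V E" "1 \<le> l"
  shows "card {q \<in> square_candidates V E. length q = 2 * l \<and> x \<in> set q}
    \<le> 5 * 2 ^ (l - 1) * max_degree V E ^ (2 * l)"
proof -
  have "2 * l = Suc (2 * l - 1)" using assms(3) by simp
  then have "card (paths_through V E (2 * l) (anchor x)) \<le> 2 * l * max_degree V E ^ (2 * l - 1)"
    using card_paths_through_le[OF assms(1), of "2 * l - 1"] by metis
  then show ?thesis
    using card_square_candidates_through_le_paths[OF assms(1), of l x]
      card_paths_through_le[OF assms(1), of "2 * l" "anchor x"]
      card_paths_through_le[OF assms(1), of l "anchor x"]
      path_count_le[OF assms(2,3)]
    by linarith
qed

lemma geometric_sum_two_fifths_le: "(\<Sum>m<N. (2 / 5 :: real) ^ m) \<le> 5 / 3"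
proof -
  have "(\<Sum>m<N. (2 / 5 :: real) ^ m) = (1 - (2 / 5) ^ N) / (1 - 2 / 5)"
    by (simp add: sum_gp_strict)
  also have "\<dots> \<le> 5 / 3" by (simp add: field_simps)
  finally show ?thesis .
qed

lemma candidate_weight_eq:
  fixes D :: nat
  assumes "D > 0"
  shows "real (5 * 2 ^ m * D ^ (2 * Suc m)) * (1 / (5 * real (D ^ 2))) ^ m = 5 * real (D ^ 2) * (2 / 5) ^ m"
proof -
  have "D ^ (2 * Suc m) = D ^ 2 * (D ^ 2) ^ m"
    by (simp flip: power_mult power_add)
  then show ?thesis
    using assms by (simp add: field_simps power_mult_distrib power_divide)
qed

lemma square_candidates_weight_le:
  assumes "simple_graph V E" "3 \<le> max_degree V E" "finite U"
  shows "(\<Sum>q | q \<in> square_candidates V E \<and> set q \<subseteq> U \<and> x \<in> set q.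
            (1 / (5 * real (max_degree V E ^ 2))) ^ (length q div 2 - 1))
         \<le> 25 * real (max_degree V E ^ 2) / 3"
proof -
  let ?d = "real (max_degree V E ^ 2)"
  let ?w = "\<lambda>q :: ('a + 'a set) list. (1 / (5 * ?d)) ^ (length q div 2 - 1)"
  define Qx where "Qx = {q. q \<in> square_candidates V E \<and> set q \<subseteq> U \<and> x \<in> set q}"
  define C where "C m = {q \<in> square_candidates V E. length q = 2 * Suc m \<and> x \<in> set q}" for m
  have "finite V" using assms(1) by (simp add: simple_graph_def)
  have "?d > 0" using assms(2) by simp
  have finite_C: "finite (C m)" for m
    unfolding C_def by (rule finite_square_candidates_through[OF \<open>finite V\<close>])
  have "finite Qx"
    by (rule finite_subset[OF _ finite_subset_distinct[OF \<open>finite U\<close>]])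
      (auto simp: Qx_def dest: square_candidate_shape)
  then obtain N where N: "\<And>q. q \<in> Qx \<Longrightarrow> length q div 2 \<le> N"
    using finite_nat_set_iff_bounded_le[of "(\<lambda>q. length q div 2) ` Qx"] by auto
  have "Qx \<subseteq> (\<Union>m<N. C m)"
  proof
    fix q assume q: "q \<in> Qx"
    then have "q \<noteq> []" "even (length q)" by (auto simp: Qx_def dest: square_candidate_shape)
    then have "length q > 0" "even (length q)" by auto
    then have "length q = 2 * Suc (length q div 2 - 1)" by presburger
    moreover have "length q div 2 - 1 < N" using N[OF q] \<open>length q > 0\<close> \<open>even (length q)\<close> by presburger
    ultimately show "q \<in> (\<Union>m<N. C m)" using q by (auto simp: Qx_def C_def)
  qed
  then have "(\<Sum>q\<in>Qx. ?w q) \<le> (\<Sum>q\<in>(\<Union>m<N. C m). ?w q)"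
    by (intro sum_mono2) (auto simp: finite_C)
  also have "\<dots> = (\<Sum>m<N. \<Sum>q\<in>C m. ?w q)"
    by (rule sum.UNION_disjoint) (simp_all add: finite_C, auto simp: C_def)
  also have "\<dots> = (\<Sum>m<N. card (C m) * (1 / (5 * ?d)) ^ m)"
    by (intro sum.cong) (auto simp: C_def)
  also have "\<dots> \<le> (\<Sum>m<N. (5 * 2 ^ m * max_degree V E ^ (2 * Suc m)) * (1 / (5 * ?d)) ^ m)"
    using card_square_candidates_through_le[OF assms(1,2), of "Suc _" x]
    by (intro sum_mono mult_right_mono) (auto simp: C_def simp del: of_nat_mult of_nat_power)
  also have "\<dots> = (\<Sum>m<N. 5 * ?d * (2 / 5) ^ m)"
    using assms(2) by (intro sum.cong refl candidate_weight_eq) simp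
  also have "\<dots> = 5 * ?d * (\<Sum>m<N. (2 / 5) ^ m)" by (simp add: sum_distrib_left)
  also have "\<dots> \<le> 5 * ?d * (5 / 3)"
    using \<open>?d > 0\<close> geometric_sum_two_fifths_le by (intro mult_left_mono) auto
  finally show ?thesis by (simp add: Qx_def)
qed

lemma total_thue_colouring_if_square_free:
  assumes f: "f \<in> square_free_colourings (square_candidates V E) k (Inl ` V \<union> Inr ` E)"
  shows "total_thue_colouring V E f k"
proof -
  have nonrep: "nonrepetitive (map f xs)" if "xs \<in> path_sequences V E" for xs
    using f path_sequencesD(2)[OF that]
    by (rule nonrepetitive_map_if_square_free) (use that in \<open>auto simp: square_candidates_def\<close>)
  have "nonrepetitive (total_seq f vs) \<and> nonrepetitive (map (\<lambda>v. f (Inl v)) vs) \<and>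
        nonrepetitive (map (\<lambda>e. f (Inr e)) (path_edges vs))" if "is_path V E vs" for vs
  proof -
    have "total_list vs \<in> path_sequences V E" "map Inl vs \<in> path_sequences V E"
      "map Inr (path_edges vs) \<in> path_sequences V E"
      using that unfolding path_sequences_def by blast+
    then have "nonrepetitive (map f (total_list vs))" "nonrepetitive (map f (map Inl vs))"
      "nonrepetitive (map f (map Inr (path_edges vs)))"
      by (simp_all only: nonrep)
    then show ?thesis by (simp add: total_seq_eq_map comp_def)
  qed
  moreover have "f (Inl v) < k" if "v \<in> V" for v
    using f that by (auto simp: square_free_colourings_def)
  moreover have "f (Inr e) < k" if "e \<in> E" for e
    using f that by (auto simp: square_free_colourings_def)
  ultimately show ?thesis by (simp add: total_thue_colouring_def)
qed

lemma square_free_total_colouring_exists: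
  assumes "simple_graph V E" "3 \<le> max_degree V E"
  shows "square_free_colourings (square_candidates V E) (15 * max_degree V E ^ 2 - 1) (Inl ` V \<union> Inr ` E)
           \<noteq> {}"
proof (rule square_free_colouring_exists[where \<alpha> = "5 * real (max_degree V E ^ 2)"])
  let ?d = "max_degree V E ^ 2"
  have "?d \<ge> 9" using power_mono[OF assms(2), of 2] by simp
  then have "real ?d \<ge> 9" by (metis of_nat_le_iff of_nat_numeral)
  then show "5 * real ?d \<ge> 1" by linarith
  show "finite (Inl ` V \<union> Inr ` E)" using assms(1) by (simp add: finite_edges simple_graph_def)
  show "q \<noteq> [] \<and> distinct q \<and> even (length q)" if "q \<in> square_candidates V E" for q
    using that by (rule square_candidate_shape)
  fix x
  have "real (15 * ?d - 1) = 15 * real ?d - 1"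
    using \<open>?d \<ge> 9\<close> by (simp add: of_nat_diff)
  then have "25 * real ?d / 3 \<le> real (15 * ?d - 1) - 5 * real ?d"
    using \<open>real ?d \<ge> 9\<close> by linarith
  then show "(\<Sum>q | q \<in> square_candidates V E \<and> set q \<subseteq> Inl ` V \<union> Inr ` E \<and> x \<in> set q.
               (1 / (5 * real ?d)) ^ (length q div 2 - 1)) \<le> real (15 * ?d - 1) - 5 * real ?d"
    using square_candidates_weight_le[OF assms \<open>finite (Inl ` V \<union> Inr ` E)\<close>, of x] by linarith
qed

theorem theorem18:
  fixes V :: "'a set" and E :: "'a set set"
  assumes "simple_graph V E"
    and "max_degree V E \<ge> 3"
  shows "pi_T V E < 15 * (max_degree V E)\<^sup>2"
proof -
  let ?k = "15 * max_degree V E ^ 2 - 1"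
  obtain f where "f \<in> square_free_colourings (square_candidates V E) ?k (Inl ` V \<union> Inr ` E)"
    using square_free_total_colouring_exists[OF assms] by blast
  then have "total_thue_colouring V E f ?k" by (rule total_thue_colouring_if_square_free)
  then have "pi_T V E \<le> ?k" unfolding pi_T_def by (intro Least_le exI)
  moreover have "max_degree V E ^ 2 \<ge> 9" using power_mono[OF assms(2), of 2] by simp
  ultimately show ?thesis by linarith
qed

end
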